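(* Let $G\cong Sz(q)={}^2B_2(q)$ with $q=2^{2m+1}$ and $m\ge 1$. Then $o(G)\ge 3.55$.
   Context: For a finite group $G$, $\psi(G)=\sum_{x\in G}|x|$ where $|x|$ is the order of $x$, and $o(G)=\psi(G)/|G|$. $Sz(q)$ is the Suzuki simple group over the field with $q$ elements. *)

theory Defs
  imports "HOL-Analysis.Analysis" "HOL-Algebra.Multiplicative_Group"
begin

definition psi :: "('g, 'c) monoid_scheme \<Rightarrow> nat" where
  "psi G = (\<Sum>x\<in>carrier G. group.ord G x)"

definition avg_order :: "('g, 'c) monoid_scheme \<Rightarrow> real" where
  "avg_order G = real (psi G) / real (card (carrier G))"

text \<open>Suzuki group Sz(q), q = 2^(2m+1), over a finite field 'a of order q,
  as the subgroup of GL_4 generated by the matrices T(a,b), M(l) (l nonzero)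
  and the antidiagonal matrix W (Wilson, The Finite Simple Groups, 4.2).
  Here a^theta = a^(2^(m+1)), so theta^2 is the Frobenius map.\<close>

definition sz_T :: "nat \<Rightarrow> 'a::field \<Rightarrow> 'a \<Rightarrow> 'a^4^4" where
  "sz_T m a b = (let th = 2^(m+1) in
     vector [vector [1, 0, 0, 0],
             vector [a, 1, 0, 0],
             vector [b, a^th, 1, 0],
             vector [a^(2+th) + a*b + b^th, a^(1+th) + b, a, 1]])"

definition sz_M :: "nat \<Rightarrow> 'a::field \<Rightarrow> 'a^4^4" where
  "sz_M m l = (let e = 2^m in
     vector [vector [l^(1+e), 0, 0, 0],
             vector [0, l^e, 0, 0],
             vector [0, 0, (inverse l)^e, 0],
             vector [0, 0, 0, (inverse l)^(1+e)]])"

definition sz_W :: "'a::field^4^4" where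
  "sz_W = vector [vector [0, 0, 0, 1], vector [0, 0, 1, 0],
                  vector [0, 1, 0, 0], vector [1, 0, 0, 0]]"

definition sz_gens :: "nat \<Rightarrow> ('a::field^4^4) set" where
  "sz_gens m = {sz_T m a b | a b. True} \<union> {sz_M m l | l. l \<noteq> 0} \<union> {sz_W}"

text \<open>Closure of the identity under left multiplication by generators; since
  every generator is invertible of finite order over a finite field, this is the
  subgroup generated.\<close>
inductive_set sz_carrier :: "nat \<Rightarrow> ('a::field^4^4) set" for m where
  one: "mat 1 \<in> sz_carrier m"
| step: "g \<in> sz_gens m \<Longrightarrow> x \<in> sz_carrier m \<Longrightarrow> g ** x \<in> sz_carrier m"

definition Sz :: "nat \<Rightarrow> ('a::field^4^4) monoid" where
  "Sz m = \<lparr>carrier = sz_carrier m, mult = (**), one = mat 1\<rparr>"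

end

theory Submission
  imports Defs
begin

text \<open>The torus \<open>T = {M \<lambda> | \<lambda> \<noteq> 0}\<close> of \<open>Sz(q)\<close> is cyclic of order
  \<open>q - 1 = 2\<^bsup>2m+1\<^esup> - 1\<close>, which is prime to 2, 3 and 5, so every element of \<open>T - {1}\<close>
  has order at least 7. An element \<open>j\<close> conjugating some \<open>M \<lambda>\<^sub>0 \<noteq> 1\<close> into \<open>T\<close> permutes the
  eigenspaces of \<open>M \<lambda>\<^sub>0\<close>; since \<open>Sz(q)\<close> preserves the Suzuki ovoid and a symplectic
  form, this forces \<open>j \<in> T \<union> W T\<close>. Double counting the pairs \<open>(k, h) \<in> G \<times> (T - {1})\<close>
  by \<open>k h k\<inverse>\<close> then shows that the conjugates of \<open>T - {1}\<close> make up at least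
  \<open>(q - 2) / (2(q - 1)) \<ge> 3/7\<close> of \<open>G\<close> when \<open>q \<ge> 8\<close>, whence
  \<open>\<psi>(G) \<ge> |G| + 6 \<cdot> 3/7 |G| = 25/7 |G| > 3.55 |G|\<close>.\<close>

lemma ord_hom_inj_eq:
  assumes G: "group G" and H: "group H" and hom: "\<phi> \<in> hom G H"
    and inj: "inj_on \<phi> (carrier G)" and x: "x \<in> carrier G"
  shows "group.ord H (\<phi> x) = group.ord G x"
proof -
  have "\<phi> x [^]\<^bsub>H\<^esub> n = \<one>\<^bsub>H\<^esub> \<longleftrightarrow> x [^]\<^bsub>G\<^esub> n = \<one>\<^bsub>G\<^esub>" for n :: nat
  proof -
    have "\<phi> x [^]\<^bsub>H\<^esub> n = \<phi> (x [^]\<^bsub>G\<^esub> n)" "\<one>\<^bsub>H\<^esub> = \<phi> \<one>\<^bsub>G\<^esub>"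
      using hom_nat_pow[OF hom x G H] hom G H
      by (simp_all add: group_hom.hom_one group_hom_axioms_def group_hom_def)
    then show ?thesis
      using inj x G by (simp add: inj_on_eq_iff group.is_monoid monoid.nat_pow_closed)
  qed
  moreover have "\<phi> x \<in> carrier H" using hom x by (simp add: hom_def Pi_def)
  ultimately show ?thesis using G H x by (simp add: group.ord_unique group.pow_eq_id)
qed

lemma (in group) conj_eq_iff:
  assumes "k \<in> carrier G" "h \<in> carrier G" "x \<in> carrier G"
  shows "k \<otimes> h \<otimes> inv k = x \<longleftrightarrow> h = inv k \<otimes> x \<otimes> k"
proof -
  have "k \<otimes> h \<otimes> inv k = x \<longleftrightarrow> k \<otimes> h = x \<otimes> k"
    using assms by (simp add: inv_solve_right')
  also have "\<dots> \<longleftrightarrow> h = inv k \<otimes> (x \<otimes> k)"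
    using assms by (auto simp: inv_solve_left)
  finally show ?thesis using assms by (simp add: m_assoc)
qed

lemma (in group) ord_conj:
  assumes g: "g \<in> carrier G" and x: "x \<in> carrier G"
  shows "ord (g \<otimes> x \<otimes> inv g) = ord x"
proof -
  have cancel: "inv g \<otimes> (g \<otimes> z) = z" if "z \<in> carrier G" for z
    using g that by (simp add: m_assoc[symmetric])
  have hom: "(\<lambda>x. g \<otimes> x \<otimes> inv g) \<in> hom G G"
    using g by (intro homI) (simp_all add: m_assoc cancel)
  have inj: "inj_on (\<lambda>x. g \<otimes> x \<otimes> inv g) (carrier G)"
    using g by (intro inj_onI) simp
  show ?thesis
    using ord_hom_inj_eq[OF is_group is_group hom inj x] by (simp only:)
qed

lemma psi_iso_eq:
  assumes G: "group G" and H: "group H" and \<phi>: "\<phi> \<in> iso G H"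
  shows "psi G = psi H"
proof -
  have bij: "bij_betw \<phi> (carrier G) (carrier H)" and hom: "\<phi> \<in> hom G H"
    using \<phi> by (simp_all add: iso_def)
  have "psi H = (\<Sum>x\<in>carrier G. group.ord H (\<phi> x))"
    unfolding psi_def using sum.reindex_bij_betw[OF bij] by metis
  also have "\<dots> = psi G"
    unfolding psi_def using ord_hom_inj_eq[OF G H hom] bij by (simp add: bij_betw_def)
  finally show ?thesis by simp
qed

lemma avg_order_iso_eq:
  assumes "group G" "group H" "G \<cong> H"
  shows "avg_order G = avg_order H"
proof -
  obtain \<phi> where "\<phi> \<in> iso G H" using assms(3) unfolding is_iso_def by blast
  then have "psi G = psi H" using psi_iso_eq assms(1,2) by blast
  then show ?thesis using iso_same_card[OF assms(3)] by (simp add: avg_order_def)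
qed

lemma (in group) psi_lower_bound:
  assumes fin: "finite (carrier G)" and X: "X \<subseteq> carrier G"
    and ord_X: "\<And>x. x \<in> X \<Longrightarrow> k \<le> ord x"
  shows "card (carrier G - X) + k * card X \<le> psi G"
proof -
  have "card (carrier G - X) = (\<Sum>x\<in>carrier G - X. 1)" by simp
  also have "\<dots> \<le> (\<Sum>x\<in>carrier G - X. ord x)"
    by (intro sum_mono) (use ord_ge_1[OF fin] in auto)
  moreover have "k * card X \<le> (\<Sum>x\<in>X. ord x)"
    using sum_mono[of X "\<lambda>_. k" ord] ord_X by (simp add: mult.commute)
  moreover have "psi G = (\<Sum>x\<in>carrier G - X. ord x) + (\<Sum>x\<in>X. ord x)"
    unfolding psi_def using sum.subset_diff[OF X fin] by simp
  ultimately show ?thesis by linarith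
qed

lemma (in group) conjugates_subset_carrier:
  assumes C: "C \<subseteq> carrier G"
  shows "{k \<otimes> h \<otimes> inv k | k h. k \<in> carrier G \<and> h \<in> C} \<subseteq> carrier G"
proof
  fix x assume "x \<in> {k \<otimes> h \<otimes> inv k | k h. k \<in> carrier G \<and> h \<in> C}"
  then obtain k h where "k \<in> carrier G" "h \<in> C" "x = k \<otimes> h \<otimes> inv k" by blast
  moreover have "h \<in> carrier G" using C \<open>h \<in> C\<close> by (rule subsetD)
  ultimately show "x \<in> carrier G" by simp
qed

text \<open>A pair \<open>(k, h)\<close> with \<open>k h k\<inverse> = k\<^sub>0 h\<^sub>0 k\<^sub>0\<inverse>\<close> is determined by \<open>k\<close>, and
  \<open>k\<inverse> k\<^sub>0\<close> conjugates \<open>h\<^sub>0\<close> to \<open>h\<close>.\<close>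
lemma (in group) card_conj_fibre_le:
  assumes fin: "finite (carrier G)" and C: "C \<subseteq> carrier G"
    and k0: "k0 \<in> carrier G" and h0: "h0 \<in> C"
  shows "card {(k, h) \<in> carrier G \<times> C. k \<otimes> h \<otimes> inv k = k0 \<otimes> h0 \<otimes> inv k0}
    \<le> card {j \<in> carrier G. j \<otimes> h0 \<otimes> inv j \<in> C}"
proof -
  define x where "x = k0 \<otimes> h0 \<otimes> inv k0"
  define P where "P = {(k, h) \<in> carrier G \<times> C. k \<otimes> h \<otimes> inv k = x}"
  define f :: "'a \<times> 'a \<Rightarrow> 'a" where "f = (\<lambda>(k, h). inv k \<otimes> k0)"
  have h0c: "h0 \<in> carrier G" using C h0 by (rule subsetD)
  have xc: "x \<in> carrier G" using k0 h0c by (simp add: x_def)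
  have P: "k \<in> carrier G" "h \<in> C" "h = inv k \<otimes> x \<otimes> k" if "(k, h) \<in> P" for k h
  proof -
    show k: "k \<in> carrier G" and h: "h \<in> C" using that by (simp_all add: P_def)
    have "h \<in> carrier G" using C h by (rule subsetD)
    then show "h = inv k \<otimes> x \<otimes> k" using that k xc conj_eq_iff by (simp add: P_def)
  qed
  have "inj_on f P"
  proof (rule inj_onI, clarify)
    fix k h k' h' assume p: "(k, h) \<in> P" and p': "(k', h') \<in> P" and "f (k, h) = f (k', h')"
    then have "inv k = inv k'" using k0 P(1)[OF p] P(1)[OF p'] by (simp add: f_def)
    then have "k = k'" using P(1)[OF p] P(1)[OF p'] by (metis inv_inv)
    then show "k = k' \<and> h = h'" using P(3)[OF p] P(3)[OF p'] by simp
  qed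
  moreover have "f ` P \<subseteq> {j \<in> carrier G. j \<otimes> h0 \<otimes> inv j \<in> C}"
  proof clarify
    fix k h assume p: "(k, h) \<in> P"
    note k = P(1)[OF p]
    have "f (k, h) \<otimes> h0 \<otimes> inv (f (k, h)) = inv k \<otimes> x \<otimes> k"
      using k k0 h0c by (simp add: f_def x_def inv_mult_group m_assoc)
    then show "f (k, h) \<in> carrier G \<and> f (k, h) \<otimes> h0 \<otimes> inv (f (k, h)) \<in> C"
      using k k0 P(2,3)[OF p] by (simp add: f_def)
  qed
  moreover have "finite {j \<in> carrier G. j \<otimes> h0 \<otimes> inv j \<in> C}" using fin by simp
  ultimately show ?thesis unfolding P_def x_def by (rule card_inj_on_le)
qed

lemma (in group) card_mult_le_card_conjugates:
  assumes fin: "finite (carrier G)" and C: "C \<subseteq> carrier G"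
    and N: "\<And>h. h \<in> C \<Longrightarrow> card {j \<in> carrier G. j \<otimes> h \<otimes> inv j \<in> C} \<le> N"
  shows "card (carrier G) * card C \<le> card {k \<otimes> h \<otimes> inv k | k h. k \<in> carrier G \<and> h \<in> C} * N"
proof -
  define X where "X = {k \<otimes> h \<otimes> inv k | k h. k \<in> carrier G \<and> h \<in> C}"
  define fibre where "fibre = (\<lambda>x. {(k, h) \<in> carrier G \<times> C. k \<otimes> h \<otimes> inv k = x})"
  have fin_X: "finite X"
    unfolding X_def by (rule finite_subset[OF conjugates_subset_carrier[OF C] fin])
  have card_fibre: "card (fibre x) \<le> N" if "x \<in> X" for x
  proof -
    from that have "\<exists>k0 h0. x = k0 \<otimes> h0 \<otimes> inv k0 \<and> k0 \<in> carrier G \<and> h0 \<in> C"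
      unfolding X_def mem_Collect_eq .
    then obtain k0 h0 where x: "x = k0 \<otimes> h0 \<otimes> inv k0" and k0: "k0 \<in> carrier G" and h0: "h0 \<in> C"
      by blast
    have "card (fibre x) \<le> card {j \<in> carrier G. j \<otimes> h0 \<otimes> inv j \<in> C}"
      unfolding fibre_def x by (rule card_conj_fibre_le[OF fin C k0 h0])
    also have "\<dots> \<le> N" using N[OF h0] .
    finally show ?thesis .
  qed
  have "finite (carrier G \<times> C)" using fin finite_subset[OF C fin] by (rule finite_cartesian_product)
  moreover have "carrier G \<times> C = (\<Union>x\<in>X. fibre x)"
    unfolding X_def fibre_def by blast
  ultimately have "card (carrier G \<times> C) \<le> (\<Sum>x\<in>X. card (fibre x))"
    using card_UN_le[OF fin_X, of fibre] by simp
  also have "\<dots> \<le> card X * N" using sum_mono[OF card_fibre] by simp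
  finally show ?thesis by (simp only: X_def card_cartesian_product)
qed

lemma divisor_two_power_odd_minus_one_ge_7:
  fixes d m :: nat
  assumes d: "d dvd 2^(2*m+1) - 1" and "d \<noteq> 1"
  shows "7 \<le> d"
proof -
  have N: "(2::nat)^(2*m+1) - 1 = 2 * 4^m - 1" by (simp add: power_mult)
  have "(4::nat)^m mod 3 = 1" using power_mod[of "4::nat" 3 m] by simp
  then obtain k where k: "(4::nat)^m = 3*k + 1" by (metis div_mult_mod_eq mult.commute)
  have "(4::nat)^n mod 5 \<in> {1, 4}" for n
    by (induction n) (auto simp: mod_mult_right_eq[of 4 "4^_" 5, symmetric])
  then obtain j where j: "(4::nat)^m = 5*j + 1 \<or> (4::nat)^m = 5*j + 4"
    by (metis div_mult_mod_eq mult.commute insert_iff singletonD)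
  have d3: "d dvd 6*k + 1" using d N k by simp
  have "(2::nat) * 4^m - 1 = 10*j + 1 \<or> (2::nat) * 4^m - 1 = 10*j + 7" using j by auto
  then have d5: "d dvd 10*j + 1 \<or> d dvd 10*j + 7" using d N by metis
  have "\<not> 2 dvd 6*k + 1" "\<not> 3 dvd 6*k + 1" "\<not> 5 dvd 10*j + 1" "\<not> 5 dvd 10*j + 7"
    by presburger+
  then have "\<not> 2 dvd d" "\<not> 3 dvd d" "d \<noteq> 5"
    using d3 d5 dvd_trans by blast+
  then show ?thesis using \<open>d \<noteq> 1\<close> by presburger
qed

lemma finite_field_power_card:
  fixes x :: "'a :: {field, finite}"
  shows "x ^ CARD('a) = x"
proof (cases "x = 0")
  case False
  have "x * (\<Prod>y\<in>UNIV-{0}. x * y) = x * x ^ (CARD('a) - 1) * \<Prod>(UNIV-{0})"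
    by (simp add: prod.distrib mult_ac)
  also have "x * x ^ (CARD('a) - 1) = x ^ CARD('a)"
    using finite_UNIV_card_ge_0[where ?'a = 'a] by (simp add: power_Suc[symmetric])
  also have "(\<Prod>y\<in>UNIV-{0}. x * y) = (\<Prod>y\<in>UNIV-{0}. y)"
    by (rule prod.reindex_bij_witness[of _ "\<lambda>y. y / x" "\<lambda>y. x * y"]) (use False in auto)
  finally show ?thesis
    by simp
qed (use finite_UNIV_card_ge_0[where ?'a = 'a] in auto)

lemma finite_field_power_card_minus_1:
  fixes x :: "'a :: {field, finite}"
  assumes "x \<noteq> 0"
  shows "x ^ (CARD('a) - 1) = 1"
proof -
  have "x * x ^ (CARD('a) - 1) = x * 1"
    using finite_field_power_card[of x] finite_UNIV_card_ge_0[where ?'a = 'a]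
    by (simp add: power_Suc[symmetric])
  then show ?thesis using assms by simp
qed

section \<open>Fields of order \<open>2\<^bsup>2m+1\<^esup>\<close>\<close>

text \<open>In the locale, \<open>x ^ (2 * e)\<close> is Wilson's field automorphism \<open>x\<^sup>\<theta>\<close>; its square is the
  Frobenius map \<open>x \<mapsto> x\<^sup>2\<close>.\<close>

locale suzuki_field =
  fixes m :: nat and F :: "'a::{field, finite} itself"
  assumes card_field: "CARD('a) = 2 ^ (2 * m + 1)"
begin

abbreviation e :: nat where "e \<equiv> 2 ^ m"

lemma card_field_eq: "CARD('a) = 2 * e * e"
proof -
  have "(2::nat) ^ (2 * m + 1) = 2 * 2 ^ (m + m)" by (simp add: mult_2)
  then show ?thesis using card_field by (simp add: power_add)
qed

lemma power_card: "(x::'a) ^ (2 * e * e) = x"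
  using finite_field_power_card[of x] unfolding card_field_eq .

lemma two_eq_zero: "(2::'a) = 0"
proof -
  have "(-1::'a) ^ (2 * e * e) = 1" by (simp add: power_mult mult.assoc)
  then have "(-1::'a) = 1" using power_card[of "-1"] by metis
  then show ?thesis by (metis one_add_one add.right_inverse)
qed

lemma add_self_eq_0 [simp]: "(x::'a) + x = 0"
  by (metis two_eq_zero mult_2 mult_zero_left)

lemma add_add_self: "(x::'a) + (x + y) = y"
  by (simp add: add.assoc[symmetric])

lemma uminus_eq_self [simp]: "- (x::'a) = x"
  by (metis add_self_eq_0 add_eq_0_iff)

lemma power2_add: "((x::'a) + y) ^ 2 = x ^ 2 + y ^ 2"
  by (simp add: power2_eq_square algebra_simps two_eq_zero[unfolded numeral_2_eq_2] add_add_self)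

lemma power_two_power_add: "((x::'a) + y) ^ (2 ^ k) = x ^ (2 ^ k) + y ^ (2 ^ k)"
proof (induction k)
  case (Suc k)
  have "(x + y) ^ (2 ^ Suc k) = ((x + y) ^ (2 ^ k)) ^ 2"
    by (simp add: power_mult[symmetric] mult.commute)
  also have "\<dots> = (x ^ (2 ^ k)) ^ 2 + (y ^ (2 ^ k)) ^ 2" using Suc power2_add by simp
  finally show ?case by (simp add: power_mult[symmetric] mult.commute)
qed simp

lemma power_two_power_inj: "(x::'a) ^ (2 ^ k) = y ^ (2 ^ k) \<Longrightarrow> x = y"
proof -
  assume "x ^ (2 ^ k) = y ^ (2 ^ k)"
  then have "(x + y) ^ (2 ^ k) = 0" using power_two_power_add[of x y k] by simp
  then show "x = y" by (simp add: add_eq_0_iff)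
qed

lemma power_two_power_eq_1: "(x::'a) ^ (2 ^ k) = 1 \<Longrightarrow> x = 1"
  using power_two_power_inj[of x k 1] by simp

lemma power2_eq_1: "(x::'a) ^ 2 = 1 \<Longrightarrow> x = 1"
  using power_two_power_eq_1[of x 1] by simp

lemma power_theta_add: "((x::'a) + y) ^ (2 * e) = x ^ (2 * e) + y ^ (2 * e)"
  using power_two_power_add[of x y "Suc m"] by simp

lemma theta_theta: "((x::'a) ^ (2 * e)) ^ (2 * e) = x ^ 2"
proof -
  have "(x ^ (2 * e)) ^ (2 * e) = (x ^ (2 * e * e)) ^ 2"
    by (simp only: power_mult[symmetric] ac_simps)
  then show ?thesis by (simp add: power_card)
qed

lemma power_e_e_square: "(((x::'a) ^ e) ^ e) ^ 2 = x"
proof -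
  have "((x ^ e) ^ e) ^ 2 = x ^ (2 * e * e)"
    by (simp only: power_mult[symmetric] ac_simps)
  then show ?thesis by (simp add: power_card)
qed

lemma power_Suc_e_eq_1: "(l::'a) ^ (1 + e) = 1 \<Longrightarrow> l = 1"
proof -
  assume h: "l ^ (1 + e) = 1"
  then have l0: "l \<noteq> 0" by auto
  have "l ^ e * (l ^ e) ^ e = 1" using arg_cong[OF h, of "\<lambda>x. x ^ e"]
    by (simp add: power_add power_mult_distrib)
  moreover have "l * l ^ e = 1" using h by (simp add: power_add)
  ultimately have "(l ^ e) ^ e = l" using l0
    by (metis mult.commute mult_cancel_left power_not_zero)
  then have "l ^ 2 = l" using power_e_e_square[of l] by simp
  then show "l = 1" using l0 by (simp add: power2_eq_square)
qed

lemma power_Suc_theta_eq_1: "(l::'a) ^ (1 + 2 * e) = 1 \<Longrightarrow> l = 1"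
proof -
  assume h: "l ^ (1 + 2 * e) = 1"
  then have l0: "l \<noteq> 0" by auto
  have "l ^ (2 * e) * (l ^ (2 * e)) ^ (2 * e) = 1" using arg_cong[OF h, of "\<lambda>x. x ^ (2 * e)"]
    by (simp only: power_add power_mult_distrib power_one_right power_one)
  then have "l ^ (2 * e) * l ^ 2 = 1" by (simp only: theta_theta)
  moreover have "l ^ (2 * e) * l = 1" using h by (simp add: power_add mult.commute)
  ultimately have "l ^ 2 = l" using l0 by (metis mult_cancel_left power_not_zero)
  then show "l = 1" using l0 by (simp add: power2_eq_square)
qed

lemma power_Suc_e_inj: "(a::'a) \<noteq> 0 \<Longrightarrow> b \<noteq> 0 \<Longrightarrow> a ^ (1 + e) = b ^ (1 + e) \<Longrightarrow> a = b"
  using power_Suc_e_eq_1[of "a / b"] by (simp add: power_divide)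

end

lemma vector_4 [simp]:
 "(vector [x,y,z,w] ::('a::zero)^4)$1 = x"
 "(vector [x,y,z,w] ::('a::zero)^4)$2 = y"
 "(vector [x,y,z,w] ::('a::zero)^4)$3 = z"
 "(vector [x,y,z,w] ::('a::zero)^4)$4 = w"
  unfolding vector_def by simp_all

lemma matrix_matrix_mult_4:
  "((A::'a::semiring_1^4^4) ** B)$i$j = A$i$1 * B$1$j + A$i$2 * B$2$j + A$i$3 * B$3$j + A$i$4 * B$4$j"
  by (simp add: matrix_matrix_mult_def sum_4)

lemma matrix_vector_mult_4:
  "((A::'a::semiring_1^4^4) *v v)$i = A$i$1 * v$1 + A$i$2 * v$2 + A$i$3 * v$3 + A$i$4 * v$4"
  by (simp add: matrix_vector_mult_def sum_4)

lemma mat_1_4: "(mat 1 :: 'a::zero_neq_one^4^4)$i$j = (if i = j then 1 else 0)"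
  by (simp add: mat_def)

lemma mat_4_eq_iff: "(x::'a^4^4) = y \<longleftrightarrow>
  x$1$1 = y$1$1 \<and> x$1$2 = y$1$2 \<and> x$1$3 = y$1$3 \<and> x$1$4 = y$1$4 \<and>
  x$2$1 = y$2$1 \<and> x$2$2 = y$2$2 \<and> x$2$3 = y$2$3 \<and> x$2$4 = y$2$4 \<and>
  x$3$1 = y$3$1 \<and> x$3$2 = y$3$2 \<and> x$3$3 = y$3$3 \<and> x$3$4 = y$3$4 \<and>
  x$4$1 = y$4$1 \<and> x$4$2 = y$4$2 \<and> x$4$3 = y$4$3 \<and> x$4$4 = y$4$4"
  by (auto simp: vec_eq_iff forall_4)

lemma sz_W_nth [simp]:
  "sz_W $1$1 = 0" "sz_W $1$2 = 0" "sz_W $1$3 = 0" "sz_W $1$4 = 1"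
  "sz_W $2$1 = 0" "sz_W $2$2 = 0" "sz_W $2$3 = 1" "sz_W $2$4 = 0"
  "sz_W $3$1 = 0" "sz_W $3$2 = 1" "sz_W $3$3 = 0" "sz_W $3$4 = 0"
  "sz_W $4$1 = 1" "sz_W $4$2 = 0" "sz_W $4$3 = 0" "sz_W $4$4 = 0"
  by (simp_all add: sz_W_def)

lemma sz_carrier_mult: "x \<in> sz_carrier m \<Longrightarrow> y \<in> sz_carrier m \<Longrightarrow> x ** y \<in> sz_carrier m"
  by (induction x rule: sz_carrier.induct)
    (auto simp: matrix_mul_assoc[symmetric] intro: sz_carrier.step)

lemma sz_gens_in_carrier: "g \<in> sz_gens m \<Longrightarrow> g \<in> sz_carrier m"
  using sz_carrier.step[OF _ sz_carrier.one] by (metis matrix_mul_rid)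

lemma sz_M_in_carrier: "l \<noteq> 0 \<Longrightarrow> sz_M m l \<in> sz_carrier m"
  by (rule sz_gens_in_carrier) (auto simp: sz_gens_def)
lemma sz_W_in_carrier: "sz_W \<in> sz_carrier m" by (rule sz_gens_in_carrier) (auto simp: sz_gens_def)

lemma monoid_Sz: "monoid (Sz m)"
  by (unfold_locales) (auto simp: Sz_def sz_carrier_mult matrix_mul_assoc intro: sz_carrier.one)

lemma sz_W_square: "(sz_W :: 'a::field^4^4) ** sz_W = mat 1"
  by (simp add: mat_4_eq_iff matrix_matrix_mult_4 mat_1_4)

lemma transpose_4_nth [simp]: "transpose (A::'a^4^4) $ i $ j = A $ j $ i"
  by (simp add: transpose_def)

lemma mult_inverse_pair:
  "(x::'a::field) \<noteq> 0 \<Longrightarrow> y \<noteq> 0 \<Longrightarrow>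
    x * y * (inverse x * inverse y) = 1 \<and> inverse x * inverse y * (x * y) = 1"
  by (simp add: field_simps)

context suzuki_field
begin

lemma sz_T_nth [simp]:
  "sz_T m a b $1$1 = 1" "sz_T m a b $1$2 = 0" "sz_T m a b $1$3 = 0" "sz_T m a b $1$4 = 0"
  "sz_T m a b $2$1 = a" "sz_T m a b $2$2 = 1" "sz_T m a b $2$3 = 0" "sz_T m a b $2$4 = 0"
  "sz_T m a b $3$1 = b" "sz_T m a b $3$2 = a^(2*e)" "sz_T m a b $3$3 = 1" "sz_T m a b $3$4 = 0"
  "sz_T m a b $4$1 = a^(2+2*e) + a*b + b^(2*e)" "sz_T m a b $4$2 = a^(1+2*e) + b"
  "sz_T m a b $4$3 = a" "sz_T m a b $4$4 = 1"
  by (simp_all add: sz_T_def Let_def)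

lemma sz_M_nth [simp]:
  "sz_M m l $1$1 = l^(1+e)" "sz_M m l $1$2 = 0" "sz_M m l $1$3 = 0" "sz_M m l $1$4 = 0"
  "sz_M m l $2$1 = 0" "sz_M m l $2$2 = l^e" "sz_M m l $2$3 = 0" "sz_M m l $2$4 = 0"
  "sz_M m l $3$1 = 0" "sz_M m l $3$2 = 0" "sz_M m l $3$3 = (inverse l)^e" "sz_M m l $3$4 = 0"
  "sz_M m l $4$1 = 0" "sz_M m l $4$2 = 0" "sz_M m l $4$3 = 0" "sz_M m l $4$4 = (inverse l)^(1+e)"
  by (simp_all add: sz_M_def Let_def)

section \<open>The invariant form and the Suzuki ovoid\<close>

definition preserves_form :: "'a^4^4 \<Rightarrow> bool" where
  "preserves_form g \<longleftrightarrow> transpose g ** sz_W ** g = sz_W"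

lemma preserves_form_sz_T: "preserves_form (sz_T m a b)"
  unfolding preserves_form_def
    by (simp add: mat_4_eq_iff matrix_matrix_mult_4 algebra_simps add_add_self)

lemma preserves_form_sz_M: "l \<noteq> 0 \<Longrightarrow> preserves_form (sz_M m l)"
  unfolding preserves_form_def
    by (simp add: mat_4_eq_iff matrix_matrix_mult_4 power_inverse power_add mult_inverse_pair)

lemma preserves_form_sz_W: "preserves_form sz_W"
  unfolding preserves_form_def by (simp add: mat_4_eq_iff matrix_matrix_mult_4)

lemma preserves_form_carrier: "x \<in> sz_carrier m \<Longrightarrow> preserves_form (x :: 'a^4^4)"
proof (induction x rule: sz_carrier.induct)
  case one then show ?case by (simp add: preserves_form_def)
next
  case (step g x)
  have "preserves_form g" using step(1)
    by (auto simp: sz_gens_def preserves_form_sz_T preserves_form_sz_M preserves_form_sz_W)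
  then have g: "transpose g ** sz_W ** g = sz_W" by (simp add: preserves_form_def)
  have "transpose (g ** x) ** sz_W ** (g ** x) = transpose x ** (transpose g ** sz_W ** g) ** x"
    by (simp add: matrix_transpose_mul matrix_mul_assoc)
  also have "\<dots> = sz_W" using g step(3) by (simp add: preserves_form_def matrix_mul_assoc)
  finally show ?case by (simp add: preserves_form_def)
qed

lemma zero_power_e [simp]: "(0::'a) ^ e = 0" "(0::'a) ^ (2 * e) = 0"
  by (simp_all add: power_0_left)

definition ovoid_fun :: "'a \<Rightarrow> 'a \<Rightarrow> 'a" where
  "ovoid_fun x y = x^(2+2*e) + x*y + y^(2*e)"

text \<open>\<open>on_ovoid v\<close> says that the projective point \<open>\<langle>v\<rangle>\<close> lies on the Suzuki--Tits ovoid
  \<open>{\<langle>(1, x, y, ovoid_fun x y)\<rangle>} \<union> {\<langle>(0, 0, 0, 1)\<rangle>}\<close>.\<close>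
definition on_ovoid :: "'a^4 \<Rightarrow> bool" where
  "on_ovoid v \<longleftrightarrow>
    (v$1 = 0 \<and> v$2 = 0 \<and> v$3 = 0 \<and> v$4 \<noteq> 0) \<or>
    (v$1 \<noteq> 0 \<and> ovoid_fun (v$2/v$1) (v$3/v$1) = v$4/v$1)"

lemma on_ovoidE:
  assumes "on_ovoid v"
  obtains "v$1 = 0" "v$2 = 0" "v$3 = 0" "v$4 \<noteq> 0"
   | x y where "v$1 \<noteq> 0" "v$2 = x * v$1" "v$3 = y * v$1" "v$4 = ovoid_fun x y * v$1"
  using assms unfolding on_ovoid_def by (metis nonzero_eq_divide_eq)

lemma on_ovoidI: "w$1 \<noteq> 0 \<Longrightarrow> w$2 = x * w$1 \<Longrightarrow> w$3 = y * w$1 \<Longrightarrow> w$4 = ovoid_fun x y * w$1 \<Longrightarrow> on_ovoid w"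
  unfolding on_ovoid_def by simp

lemma ovoid_fun_eq: "ovoid_fun x y = x^2 * x^(2*e) + x*y + y^(2*e)"
  unfolding ovoid_fun_def by (simp only: power_add)

lemma power2_theta_commute: "((x::'a)^2)^(2*e) = (x^(2*e))^2"
  by (simp only: power_mult[symmetric] mult.commute)

lemma ovoid_fun_theta: "(ovoid_fun x y)^(2*e) = (x^(2*e))^2 * x^2 + x^(2*e) * y^(2*e) + y^2"
  unfolding ovoid_fun_eq power_theta_add power_mult_distrib power2_theta_commute theta_theta ..

lemma ovoid_fun_eq_0: assumes "ovoid_fun x y = 0" shows "x = 0 \<and> y = 0"
proof -
  define X where "X = x^(2*e)"
  define Y where "Y = y^(2*e)"
  have h1: "x^2*X + x*y + Y = 0" using assms by (simp only: ovoid_fun_eq X_def Y_def)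
  have h2: "X^2*x^2 + X*Y + y^2 = 0" using ovoid_fun_theta[of x y] assms
    by (simp add: X_def Y_def power_0_left)
  have "y*(x*X+y) = (X^2*x^2 + X*Y + y^2) + X*(x^2*X + x*y + Y)"
    by (simp add: algebra_simps add_add_self power2_eq_square)
  then have "y = 0 \<or> y = x*X" using h1 h2 by (simp add: add_eq_0_iff)
  then show ?thesis
  proof
    assume "y = 0" then show ?thesis using h1 by (simp add: X_def Y_def)
  next
    assume y: "y = x*X"
    then have Y: "Y = X * x^2" by (simp add: Y_def X_def power_mult_distrib theta_theta)
    have "x^2*X = 0" using h1 y Y
      by (simp add: algebra_simps add_add_self power2_eq_square two_eq_zero)
    then have "x = 0" by (simp add: X_def)
    then show ?thesis using y by simp
  qed
qed

lemma ovoid_fun_translate: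
  "ovoid_fun (a+x) (b + a^(2*e)*x + y) =
    (a^2*a^(2*e) + a*b + b^(2*e)) + (a*a^(2*e) + b)*x + a*y + ovoid_fun x y"
  unfolding ovoid_fun_eq power2_add power_theta_add power_mult_distrib theta_theta
  by (simp add: algebra_simps add_add_self power2_eq_square)

lemma on_ovoid_sz_T: assumes "on_ovoid v" shows "on_ovoid (sz_T m a b *v v)"
  using assms
proof (cases rule: on_ovoidE)
  case 1 then show ?thesis unfolding on_ovoid_def by (simp add: matrix_vector_mult_4)
next
  case (2 x y)
  show ?thesis
  proof (rule on_ovoidI[where x = "a+x" and y = "b + a^(2*e)*x + y"])
    show "(sz_T m a b *v v) $ 1 \<noteq> 0" using 2 by (simp add: matrix_vector_mult_4)
    show "(sz_T m a b *v v) $ 2 = (a + x) * (sz_T m a b *v v) $ 1" using 2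
      by (simp add: matrix_vector_mult_4 algebra_simps)
    show "(sz_T m a b *v v) $ 3 = (b + a^(2*e)*x + y) * (sz_T m a b *v v) $ 1" using 2
      by (simp add: matrix_vector_mult_4 algebra_simps)
    show "(sz_T m a b *v v) $ 4 = ovoid_fun (a + x) (b + a^(2*e)*x + y) * (sz_T m a b *v v) $ 1"
      using 2 unfolding ovoid_fun_translate
        by (simp add: matrix_vector_mult_4 algebra_simps power_add power2_eq_square)
  qed
qed

lemma ovoid_fun_scale:
  assumes l: "l \<noteq> 0"
  shows "ovoid_fun (x/l) (y/(l*(l^e)^2)) = ovoid_fun x y / (l^2*(l^e)^2)"
proof -
  define u where "u = l^e"
  have u0: "u \<noteq> 0" using l by (simp add: u_def)
  have P1: "l^(2*e) = u^2" by (simp add: u_def power_mult[symmetric] mult.commute)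
  have P2: "(u^2)^(2*e) = l^2"
  proof -
    have "(u^2)^(2*e) = (l^(2*e*e))^2"
      by (simp add: u_def power_mult[symmetric] mult.commute mult.left_commute)
    then show ?thesis by (simp add: power_card)
  qed
  have "ovoid_fun (x/l) (y/(l*u^2)) = x^2/l^2 * (x^(2*e)/u^2) + x*y/(l^2*u^2) + y^(2*e)/(u^2*l^2)"
    unfolding ovoid_fun_eq power_divide power_mult_distrib P1 P2 by (simp add: power2_eq_square)
  also have "\<dots> = ovoid_fun x y / (l^2*u^2)"
    unfolding ovoid_fun_eq using l u0 by (simp add: field_simps)
  finally show ?thesis by (simp add: u_def)
qed

lemma inverse_scale_eq:
  "(l::'a) \<noteq> 0 \<Longrightarrow> u \<noteq> 0 \<Longrightarrow>
    inverse l * inverse u * (f * w) = f * (l * u * w) / (l^2 * u^2)"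
  by (simp add: field_simps power2_eq_square)

lemma on_ovoid_sz_M: assumes "on_ovoid v" "l \<noteq> 0" shows "on_ovoid (sz_M m l *v v)"
  using assms(1)
proof (cases rule: on_ovoidE)
  case 1 then show ?thesis using assms(2) unfolding on_ovoid_def by (simp add: matrix_vector_mult_4)
next
  case (2 x y)
  have l: "l \<noteq> 0" by fact
  show ?thesis
  proof (rule on_ovoidI[where x = "x/l" and y = "y/(l*(l^e)^2)"])
    show "(sz_M m l *v v) $ 1 \<noteq> 0" using 2 l by (simp add: matrix_vector_mult_4)
    show "(sz_M m l *v v) $ 2 = (x/l) * (sz_M m l *v v) $ 1" using 2 l
      by (simp add: matrix_vector_mult_4 field_simps power_add)
    show "(sz_M m l *v v) $ 3 = (y/(l*(l^e)^2)) * (sz_M m l *v v) $ 1" using 2 l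
      by (simp add: matrix_vector_mult_4 field_simps power_add power_inverse power2_eq_square)
    show "(sz_M m l *v v) $ 4 = ovoid_fun (x/l) (y/(l*(l^e)^2)) * (sz_M m l *v v) $ 1"
      using 2 l unfolding ovoid_fun_scale[OF l]
        by (simp add: matrix_vector_mult_4 power_add power_inverse inverse_scale_eq)
  qed
qed

lemma ovoid_fun_swap:
  assumes f0: "ovoid_fun x y \<noteq> 0"
  shows "ovoid_fun (y / ovoid_fun x y) (x / ovoid_fun x y) = 1 / ovoid_fun x y"
proof -
  define f where "f = ovoid_fun x y"
  define X where "X = x^(2*e)"
  define Y where "Y = y^(2*e)"
  define F where "F = f^(2*e)"
  have fe: "f = x^2*X + x*y + Y" by (simp add: f_def ovoid_fun_eq X_def Y_def)
  have Fe: "F = X^2*x^2 + X*Y + y^2" by (simp add: F_def f_def ovoid_fun_theta X_def Y_def)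
  have f0': "f \<noteq> 0" using f0 by (simp add: f_def)
  have F0: "F \<noteq> 0" using f0' by (simp add: F_def)
  have eq: "y^2*Y + x*y*F + X*f^2 = f*F"
    unfolding Fe fe by (simp add: algebra_simps add_add_self power2_eq_square two_eq_zero)
  have "ovoid_fun (y/f) (x/f) = y^2/f^2 * (Y/F) + x*y/f^2 + X/F"
    unfolding ovoid_fun_eq power_divide X_def Y_def F_def by (simp add: power2_eq_square)
  also have "\<dots> = (y^2*Y + x*y*F + X*f^2) / (f^2*F)"
    using f0' F0 by (simp add: field_simps)
  also have "\<dots> = 1/f" unfolding eq using f0' F0 by (simp add: field_simps power2_eq_square)
  finally show ?thesis by (simp add: f_def)
qed

lemma on_ovoid_sz_W: assumes "on_ovoid v" shows "on_ovoid (sz_W *v v)"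
  using assms
proof (cases rule: on_ovoidE)
  case 1 then show ?thesis
    by (intro on_ovoidI[where x = 0 and y = 0]) (simp_all add: matrix_vector_mult_4 ovoid_fun_def)
next
  case (2 x y)
  show ?thesis
  proof (cases "ovoid_fun x y = 0")
    case True
    then have "x = 0" "y = 0" using ovoid_fun_eq_0[OF True] by simp_all
    then show ?thesis using 2 True unfolding on_ovoid_def by (simp add: matrix_vector_mult_4)
  next
    case False
    show ?thesis
    proof (rule on_ovoidI[where x = "y / ovoid_fun x y" and y = "x / ovoid_fun x y"])
      show "(sz_W *v v) $ 1 \<noteq> 0" using 2 False by (simp add: matrix_vector_mult_4)
      show "(sz_W *v v) $ 2 = (y / ovoid_fun x y) * (sz_W *v v) $ 1" using 2 False
        by (simp add: matrix_vector_mult_4)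
      show "(sz_W *v v) $ 3 = (x / ovoid_fun x y) * (sz_W *v v) $ 1" using 2 False
        by (simp add: matrix_vector_mult_4)
      show "(sz_W *v v) $ 4 = ovoid_fun (y / ovoid_fun x y) (x / ovoid_fun x y) * (sz_W *v v) $ 1"
        using 2 False unfolding ovoid_fun_swap[OF False] by (simp add: matrix_vector_mult_4)
    qed
  qed
qed

lemma on_ovoid_carrier: "g \<in> sz_carrier m \<Longrightarrow> on_ovoid v \<Longrightarrow> on_ovoid ((g :: 'a^4^4) *v v)"
proof (induction g arbitrary: v rule: sz_carrier.induct)
  case one then show ?case by simp
next
  case (step g x)
  have "on_ovoid (x *v v)" using step by simp
  then have "on_ovoid (g *v (x *v v))" using step(1)
    by (auto simp: sz_gens_def on_ovoid_sz_T on_ovoid_sz_M on_ovoid_sz_W)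
  then show ?case by (simp add: matrix_vector_mul_assoc)
qed

section \<open>Diagonal elements and the normaliser of the torus\<close>

lemma sz_M_mult: "sz_M m a ** sz_M m b = (sz_M m (a*b) :: 'a^4^4)"
  by (simp add: mat_4_eq_iff matrix_matrix_mult_4 power_mult_distrib)

lemma sz_M_1: "sz_M m 1 = (mat 1 :: 'a^4^4)"
  by (simp add: mat_4_eq_iff mat_1_4)

lemma sz_W_sz_M_sz_W: "sz_W ** sz_M m l ** sz_W = (sz_M m (inverse l) :: 'a^4^4)"
  by (simp add: mat_4_eq_iff matrix_matrix_mult_4)

lemma sz_M_inj: "sz_M m a = (sz_M m b :: 'a^4^4) \<Longrightarrow> a = b"
proof -
  assume "sz_M m a = (sz_M m b :: 'a^4^4)"
  then have "sz_M m a $2$2 = (sz_M m b :: 'a^4^4) $2$2" by simp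
  then have "a^(2^m) = b^(2^m)" by simp
  then show "a = b" by (rule power_two_power_inj)
qed

lemma sz_M_diagonal_distinct:
  fixes l :: 'a
  assumes "l \<noteq> 0" "l \<noteq> 1"
  shows "l * l^e \<noteq> l^e" "l * l^e \<noteq> inverse (l^e)" "l * l^e \<noteq> inverse l * inverse (l^e)"
    and "l^e \<noteq> inverse (l^e)" "l^e \<noteq> inverse l * inverse (l^e)"
    and "inverse (l^e) \<noteq> inverse l * inverse (l^e)"
proof -
  have u0: "l^e \<noteq> 0" by (rule power_not_zero[OF assms(1)])
  have A: "l * (l^e)^2 \<noteq> 1"
  proof
    assume "l * (l^e)^2 = 1"
    then have "l^(1+2*e) = 1" by (simp add: power_add power_mult[symmetric] mult.commute)
    then show False using power_Suc_theta_eq_1 assms by blast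
  qed
  have B: "l * l^e \<noteq> 1"
  proof
    assume "l * l^e = 1"
    then have "l^(1+e) = 1" by (simp add: power_add)
    then show False using power_Suc_e_eq_1 assms by blast
  qed
  have C: "l^e \<noteq> 1" using power_two_power_eq_1[of l m] assms by auto
  show "l * l^e \<noteq> l^e" using assms u0 by simp
  show "l * l^e \<noteq> inverse (l^e)" using A u0 by (auto simp: field_simps power2_eq_square)
  show "l * l^e \<noteq> inverse l * inverse (l^e)"
  proof
    assume "l * l^e = inverse l * inverse (l^e)"
    then have "(l*l^e)^2 = 1" using assms u0 by (simp add: field_simps power2_eq_square)
    then show False using power2_eq_1 B by blast
  qed
  show "l^e \<noteq> inverse (l^e)"
  proof
    assume "l^e = inverse (l^e)"
    then have "(l^e)^2 = 1" using u0 by (simp add: field_simps power2_eq_square)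
    then show False using power2_eq_1 C by blast
  qed
  show "l^e \<noteq> inverse l * inverse (l^e)" using A u0 assms
    by (auto simp: field_simps power2_eq_square)
  show "inverse (l^e) \<noteq> inverse l * inverse (l^e)" using assms u0 by (simp add: field_simps)
qed

lemma commute_sz_M_imp_diagonal:
  assumes l: "l \<noteq> 0" "l \<noteq> 1" and c: "j ** sz_M m l = sz_M m l ** (j :: 'a^4^4)"
  shows "r \<noteq> s \<Longrightarrow> j$r$s = 0"
proof -
  note d = sz_M_diagonal_distinct[OF l]
  have E: "\<And>r s. (j ** sz_M m l)$r$s = (sz_M m l ** j)$r$s" using c by simp
  have X: "\<And>a x y. a * x = y * (a::'a) \<Longrightarrow> x \<noteq> y \<Longrightarrow> a = 0" by (simp add: mult.commute)
  assume rs: "r \<noteq> s"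
  show "j$r$s = 0"
    using exhaust_4[of r] exhaust_4[of s] rs E[of r s] d
    by (auto simp: matrix_matrix_mult_4 power_add power_inverse dest!: X)
qed

text \<open>The entries of a diagonal element are pinned down by the three ovoid points
  \<open>(1,1,0,1)\<close>, \<open>(1,0,1,1)\<close>, \<open>(1,1,1,1)\<close> and by the invariant form.\<close>
lemma diagonal_carrier_relations:
  assumes d: "d \<in> sz_carrier m" and off: "\<And>r s. r \<noteq> s \<Longrightarrow> (d :: 'a^4^4)$r$s = 0"
  shows "d$1$1 * d$4$4 = 1" "d$2$2 * d$3$3 = 1"
    and "(d$2$2 / d$1$1) ^ (2 + 2*e) = d$4$4 / d$1$1"
    and "(d$2$2 / d$1$1) * (d$3$3 / d$1$1) = d$4$4 / d$1$1"
proof -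
  have o: "d$1$2 = 0" "d$1$3 = 0" "d$1$4 = 0" "d$2$1 = 0" "d$2$3 = 0" "d$2$4 = 0"
    "d$3$1 = 0" "d$3$2 = 0" "d$3$4 = 0" "d$4$1 = 0" "d$4$2 = 0" "d$4$3 = 0" by (simp_all add: off)
  have "transpose d ** sz_W ** d = sz_W"
    using preserves_form_carrier[OF d] by (simp add: preserves_form_def)
  then have "(transpose d ** sz_W ** d)$1$4 = sz_W $1$4"
    and "(transpose d ** sz_W ** d)$2$3 = sz_W $2$3"
    by simp_all
  then show s14: "d$1$1 * d$4$4 = 1" and s23: "d$2$2 * d$3$3 = 1"
    using o by (simp_all add: matrix_matrix_mult_4)
  have points: "on_ovoid (vector [1,1,0,1] :: 'a^4)" "on_ovoid (vector [1,0,1,1] :: 'a^4)"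
    "on_ovoid (vector [1,1,1,1] :: 'a^4)"
    unfolding on_ovoid_def by (simp_all add: ovoid_fun_def)
  have d1: "d$1$1 \<noteq> 0" using s14 by auto
  have "ovoid_fun (d$2$2 / d$1$1) 0 = d$4$4 / d$1$1"
    "ovoid_fun 0 (d$3$3 / d$1$1) = d$4$4 / d$1$1"
    "ovoid_fun (d$2$2 / d$1$1) (d$3$3 / d$1$1) = d$4$4 / d$1$1"
    using on_ovoid_carrier[OF d points(1)] on_ovoid_carrier[OF d points(2)]
      on_ovoid_carrier[OF d points(3)] d1 o
    unfolding on_ovoid_def by (simp_all add: matrix_vector_mult_4)
  then show "(d$2$2 / d$1$1) ^ (2 + 2*e) = d$4$4 / d$1$1"
    and "(d$2$2 / d$1$1) * (d$3$3 / d$1$1) = d$4$4 / d$1$1"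
    unfolding ovoid_fun_def by (simp_all add: add_add_self add.commute)
qed

lemma diagonal_carrier_eq_sz_M:
  assumes d: "d \<in> sz_carrier m" and off: "\<And>r s. r \<noteq> s \<Longrightarrow> (d :: 'a^4^4)$r$s = 0"
  shows "\<exists>l. l \<noteq> 0 \<and> d = sz_M m l"
proof -
  define u where "u = d$2$2 / d$1$1"
  define U where "U = u ^ e"
  define c where "c = d$4$4 / d$1$1"
  have rel: "d$1$1 * d$4$4 = 1" "d$2$2 * d$3$3 = 1" "u ^ (2 + 2*e) = c" "u * (d$3$3 / d$1$1) = c"
    using diagonal_carrier_relations[OF d off] by (simp_all add: u_def c_def)
  have nz: "d$1$1 \<noteq> 0" "d$2$2 \<noteq> 0" "d$3$3 \<noteq> 0" "d$4$4 \<noteq> 0" using rel(1,2) by auto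
  then have u0: "u \<noteq> 0" and U0: "U \<noteq> 0" by (simp_all add: u_def U_def)
  have "c = u ^ 2 * u ^ (2 * e)" using rel(3) by (simp only: power_add)
  also have "u ^ (2 * e) = U ^ 2" by (simp only: U_def power_mult[symmetric] mult.commute)
  finally have cU: "c = (u * U) ^ 2" by (simp add: power_mult_distrib)
  have "c * (d$1$1) ^ 2 = 1"
    using rel(2,4) nz by (simp add: u_def c_def field_simps power2_eq_square)
  then have "(u * U * d$1$1) ^ 2 = 1" using cU by (simp add: power_mult_distrib)
  then have k: "u * U * d$1$1 = 1" by (rule power2_eq_1)
  define l where "l = inverse u"
  have lU: "l ^ e = inverse U" by (simp add: l_def U_def power_inverse)
  have "d$1$1 = l ^ (1 + e)" using k u0 U0
    by (simp add: power_add lU l_def field_simps U_def[symmetric])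
  moreover have d2: "d$2$2 = l ^ e" using k u0 U0 by (simp add: lU u_def field_simps)
  moreover have "d$4$4 = u * U" using k cU nz by (simp add: c_def field_simps power2_eq_square)
  then have "d$4$4 = (inverse l) ^ (1 + e)" by (simp add: l_def U_def power_add)
  moreover have "d$3$3 = (inverse l) ^ e"
  proof -
    have "d$2$2 * U = 1" using d2 lU U0 by simp
    then have "d$2$2 * d$3$3 = d$2$2 * U" using rel(2) by simp
    then have "d$3$3 = U" using nz by simp
    then show ?thesis by (simp add: l_def U_def)
  qed
  moreover have "l \<noteq> 0" using u0 by (simp add: l_def)
  moreover have "d$1$2 = 0" "d$1$3 = 0" "d$1$4 = 0" "d$2$1 = 0" "d$2$3 = 0" "d$2$4 = 0"
    "d$3$1 = 0" "d$3$2 = 0" "d$3$4 = 0" "d$4$1 = 0" "d$4$2 = 0" "d$4$3 = 0" by (simp_all add: off)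
  ultimately show ?thesis by (auto simp: mat_4_eq_iff)
qed

lemma commute_sz_M_in_torus:
  fixes j :: "'a^4^4"
  assumes l0: "l0 \<noteq> 0" "l0 \<noteq> 1" and j: "j \<in> sz_carrier m"
    and comm: "j ** sz_M m l0 = sz_M m l0 ** j"
  shows "\<exists>l. l \<noteq> 0 \<and> j = sz_M m l"
proof -
  have "\<And>r s. r \<noteq> s \<Longrightarrow> j$r$s = 0" using comm by (rule commute_sz_M_imp_diagonal[OF l0])
  then show ?thesis by (rule diagonal_carrier_eq_sz_M[OF j])
qed

text \<open>The first column of \<open>j\<close> is the ovoid point \<open>j (1,0,0,0)\<close>, so \<open>j\<^sub>1\<^sub>1 \<noteq> 0\<close> or
  \<open>j\<^sub>4\<^sub>1 \<noteq> 0\<close>; comparing the first columns of both sides gives \<open>l' = l\<^sub>0\<close> resp. \<open>l' = l\<^sub>0\<inverse>\<close>.\<close>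
lemma commute_sz_M_scalar_cases:
  fixes j :: "'a^4^4"
  assumes l0: "l0 \<noteq> 0" and l': "l' \<noteq> 0" and j: "j \<in> sz_carrier m"
    and comm: "j ** sz_M m l0 = sz_M m l' ** j"
  shows "l' = l0 \<or> l' = inverse l0"
proof -
  have col: "j$r$1 * l0^(1+e) = (sz_M m l')$r$r * j$r$1" for r
  proof -
    have "(j ** sz_M m l0)$r$1 = (sz_M m l' ** j)$r$1" using comm by simp
    then show ?thesis using exhaust_4[of r] by (auto simp: matrix_matrix_mult_4)
  qed
  have "on_ovoid (vector [1,0,0,0] :: 'a^4)" unfolding on_ovoid_def by (simp add: ovoid_fun_def)
  then have "on_ovoid (j *v vector [1,0,0,0])" by (rule on_ovoid_carrier[OF j])
  then have "j$1$1 \<noteq> 0 \<or> j$4$1 \<noteq> 0" unfolding on_ovoid_def by (auto simp: matrix_vector_mult_4)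
  then show ?thesis
  proof
    assume "j$1$1 \<noteq> 0"
    then show ?thesis using col[of 1] power_Suc_e_inj[OF l0 l'] by simp
  next
    assume "j$4$1 \<noteq> 0"
    then have "l0 ^ (1+e) = (inverse l') ^ (1+e)" using col[of 4] by (simp add: power_inverse)
    then have "l0 = inverse l'" using power_Suc_e_inj[OF l0] l' by simp
    then show ?thesis by simp
  qed
qed

lemma commute_sz_M_cases:
  fixes j :: "'a^4^4"
  assumes l0: "l0 \<noteq> 0" "l0 \<noteq> 1" and l': "l' \<noteq> 0" and j: "j \<in> sz_carrier m"
    and comm: "j ** sz_M m l0 = sz_M m l' ** j"
  shows "(\<exists>l. l \<noteq> 0 \<and> j = sz_M m l) \<or> (\<exists>l. l \<noteq> 0 \<and> j = sz_W ** sz_M m l)"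
  using commute_sz_M_scalar_cases[OF l0(1) l' j comm]
proof
  assume "l' = l0"
  then have "\<exists>l. l \<noteq> 0 \<and> j = sz_M m l" using commute_sz_M_in_torus[OF l0 j] comm by simp
  then show ?thesis ..
next
  assume "l' = inverse l0"
  then have M_l0: "sz_M m l0 = sz_W ** sz_M m l' ** sz_W" using sz_W_sz_M_sz_W l0 by simp
  define w where "w = sz_W ** j"
  have "w ** sz_M m l0 = sz_W ** (sz_M m l' ** j)"
    unfolding w_def comm[symmetric] by (simp add: matrix_mul_assoc)
  also have "\<dots> = sz_W ** sz_M m l' ** (sz_W ** sz_W) ** j"
    by (simp add: sz_W_square matrix_mul_assoc)
  also have "\<dots> = sz_M m l0 ** w" unfolding M_l0 w_def by (simp add: matrix_mul_assoc)
  finally have "\<exists>l. l \<noteq> 0 \<and> w = sz_M m l"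
    using commute_sz_M_in_torus[OF l0] sz_carrier_mult[OF sz_W_in_carrier j] by (simp add: w_def)
  moreover have "j = sz_W ** w" unfolding w_def by (simp add: matrix_mul_assoc sz_W_square)
  ultimately show ?thesis by blast
qed

end

lemma carrier_Sz: "carrier (Sz m) = sz_carrier m"
  and mult_Sz: "x \<otimes>\<^bsub>Sz m\<^esub> y = x ** y"
  and one_Sz: "\<one>\<^bsub>Sz m\<^esub> = mat 1"
  by (simp_all add: Sz_def)

locale suzuki_group = suzuki_field m F for m and F :: "'a::{field, finite} itself" +
  assumes group_Sz: "group (Sz m :: ('a^4^4) monoid)"
begin

abbreviation S :: "('a^4^4) monoid" where "S \<equiv> Sz m"

sublocale S: group S by (rule group_Sz)

lemma finite_carrier_S: "finite (carrier S)"
  by (rule finite_subset[of _ UNIV]) auto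

definition torus :: "('a^4^4) set" where
  "torus = sz_M m ` (UNIV - {0})"

lemma card_torus: "card torus = CARD('a) - 1"
proof -
  have "inj_on (sz_M m :: 'a \<Rightarrow> 'a^4^4) (UNIV - {0})" by (auto intro: inj_onI sz_M_inj)
  then show ?thesis unfolding torus_def by (simp add: card_image card_Diff_singleton)
qed

lemma torus_subset_carrier: "torus \<subseteq> carrier S"
  unfolding torus_def carrier_Sz using sz_M_in_carrier by auto

lemma sz_M_pow: "sz_M m l [^]\<^bsub>S\<^esub> (n::nat) = sz_M m ((l::'a) ^ n)"
  by (induction n) (simp_all add: one_Sz mult_Sz sz_M_1 sz_M_mult mult.commute)

lemma ord_torus_ge_7:
  assumes h: "h \<in> torus - {mat 1}"
  shows "7 \<le> S.ord h"
proof -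
  obtain l where l: "l \<noteq> 0" "h = sz_M m l" using h by (auto simp: torus_def)
  have hc: "h \<in> carrier S" using h torus_subset_carrier by blast
  have "h [^]\<^bsub>S\<^esub> (CARD('a) - 1) = \<one>\<^bsub>S\<^esub>"
    unfolding l(2) sz_M_pow finite_field_power_card_minus_1[OF l(1)] by (simp add: sz_M_1 one_Sz)
  then have "S.ord h dvd 2 ^ (2*m+1) - 1" using S.pow_eq_id[OF hc] card_field by simp
  moreover have "S.ord h \<noteq> 1" using S.ord_eq_1[OF hc] h by (simp add: one_Sz)
  ultimately show ?thesis by (rule divisor_two_power_odd_minus_one_ge_7)
qed

lemma card_conj_into_torus_le:
  assumes h: "h \<in> torus - {mat 1}"
  shows "card {j \<in> carrier S. j \<otimes>\<^bsub>S\<^esub> h \<otimes>\<^bsub>S\<^esub> inv\<^bsub>S\<^esub> j \<in> torus - {mat 1}} \<le> 2 * (CARD('a) - 1)"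
proof -
  obtain l0 where l0: "l0 \<noteq> 0" "l0 \<noteq> 1" and h_eq: "h = sz_M m l0"
    using h sz_M_1 by (auto simp: torus_def)
  have hc: "h \<in> carrier S" using h torus_subset_carrier by blast
  have "{j \<in> carrier S. j \<otimes>\<^bsub>S\<^esub> h \<otimes>\<^bsub>S\<^esub> inv\<^bsub>S\<^esub> j \<in> torus - {mat 1}} \<subseteq> torus \<union> (\<lambda>d. sz_W ** d) ` torus"
  proof
    fix j assume "j \<in> {j \<in> carrier S. j \<otimes>\<^bsub>S\<^esub> h \<otimes>\<^bsub>S\<^esub> inv\<^bsub>S\<^esub> j \<in> torus - {mat 1}}"
    then have jc: "j \<in> carrier S" and "j \<otimes>\<^bsub>S\<^esub> h \<otimes>\<^bsub>S\<^esub> inv\<^bsub>S\<^esub> j \<in> torus - {mat 1}"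
      by simp_all
    then obtain l' where l': "l' \<noteq> 0" and conj: "j \<otimes>\<^bsub>S\<^esub> h \<otimes>\<^bsub>S\<^esub> inv\<^bsub>S\<^esub> j = sz_M m l'"
      by (auto simp: torus_def)
    have "sz_M m l' \<in> carrier S" using l' sz_M_in_carrier by (simp add: carrier_Sz)
    then have "j \<otimes>\<^bsub>S\<^esub> h = sz_M m l' \<otimes>\<^bsub>S\<^esub> j" using conj jc hc S.inv_solve_right' by simp
    then have "j ** sz_M m l0 = sz_M m l' ** j" by (simp add: h_eq mult_Sz)
    then have "(\<exists>l. l \<noteq> 0 \<and> j = sz_M m l) \<or> (\<exists>l. l \<noteq> 0 \<and> j = sz_W ** sz_M m l)"
      using commute_sz_M_cases[OF l0 l'] jc by (simp add: carrier_Sz)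
    then show "j \<in> torus \<union> (\<lambda>d. sz_W ** d) ` torus" unfolding torus_def by blast
  qed
  moreover have "finite (torus \<union> (\<lambda>d. sz_W ** d) ` torus)" by (simp add: torus_def)
  ultimately have "card {j \<in> carrier S. j \<otimes>\<^bsub>S\<^esub> h \<otimes>\<^bsub>S\<^esub> inv\<^bsub>S\<^esub> j \<in> torus - {mat 1}}
      \<le> card (torus \<union> (\<lambda>d. sz_W ** d) ` torus)"
    by (simp add: card_mono)
  also have "\<dots> \<le> card torus + card ((\<lambda>d. sz_W ** d) ` torus)" by (rule card_Un_le)
  also have "\<dots> \<le> card torus + card torus"
    using card_image_le[of torus] by (simp add: torus_def)
  finally show ?thesis using card_torus by simp
qed

definition torus_conjugates :: "('a^4^4) set" where
  "torus_conjugates =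
    {k \<otimes>\<^bsub>S\<^esub> h \<otimes>\<^bsub>S\<^esub> inv\<^bsub>S\<^esub> k | k h. k \<in> carrier S \<and> h \<in> torus - {mat 1}}"

lemma torus_conjugates_carrier_ord:
  assumes "x \<in> torus_conjugates"
  shows "x \<in> carrier S" and "7 \<le> S.ord x"
proof -
  from assms have "\<exists>k h. x = k \<otimes>\<^bsub>S\<^esub> h \<otimes>\<^bsub>S\<^esub> inv\<^bsub>S\<^esub> k \<and> k \<in> carrier S \<and> h \<in> torus - {mat 1}"
    unfolding torus_conjugates_def mem_Collect_eq .
  then obtain k h where x: "x = k \<otimes>\<^bsub>S\<^esub> h \<otimes>\<^bsub>S\<^esub> inv\<^bsub>S\<^esub> k"
    and k: "k \<in> carrier S" and h: "h \<in> torus - {mat 1}"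
    by blast
  have "h \<in> carrier S" using h torus_subset_carrier by blast
  then show "x \<in> carrier S" and "7 \<le> S.ord x"
    using S.ord_conj[OF k] ord_torus_ge_7[OF h] k unfolding x by simp_all
qed

lemma card_torus_conjugates_ge:
  assumes "m \<ge> 1"
  shows "3 * card (carrier S) \<le> 7 * card torus_conjugates"
proof -
  define n where "n = card (carrier S)"
  define q where "q = CARD('a)"
  have "(8::nat) = 2 ^ 3" by simp
  also have "\<dots> \<le> 2 ^ (2 * m + 1)" using assms by (intro power_increasing) simp_all
  also have "\<dots> = q" unfolding q_def by (rule card_field[symmetric])
  finally have "q \<ge> 8" .
  have "mat 1 \<in> torus" unfolding torus_def sz_M_1[symmetric] by (rule imageI) simp
  then have "card (torus - {mat 1}) = q - 2"
    using card_torus by (simp add: q_def card_Diff_singleton)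
  moreover have "torus - {mat 1} \<subseteq> carrier S" using torus_subset_carrier by blast
  then have "n * card (torus - {mat 1}) \<le> card torus_conjugates * (2 * (q - 1))"
    unfolding n_def torus_conjugates_def q_def
    by (rule S.card_mult_le_card_conjugates[OF finite_carrier_S _ card_conj_into_torus_le])
  ultimately have count: "n * (q - 2) \<le> card torus_conjugates * (2 * (q - 1))" by simp
  have "n * (6 * (q - 1)) \<le> n * (7 * (q - 2))"
    using \<open>q \<ge> 8\<close> by (intro mult_le_mono2) simp
  also have "\<dots> \<le> 7 * (card torus_conjugates * (2 * (q - 1)))" using count by simp
  finally have "(6 * n) * (q - 1) \<le> (14 * card torus_conjugates) * (q - 1)"
    by (simp add: algebra_simps)
  then show ?thesis using \<open>q \<ge> 8\<close> by (simp add: n_def)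
qed

lemma avg_order_Sz_ge:
  assumes "m \<ge> 1"
  shows "avg_order S \<ge> 3.55"
proof -
  define n where "n = card (carrier S)"
  have X_sub: "torus_conjugates \<subseteq> carrier S"
    using torus_conjugates_carrier_ord(1) by blast
  have "card (carrier S - torus_conjugates) + 7 * card torus_conjugates \<le> psi S"
    using S.psi_lower_bound[OF finite_carrier_S X_sub torus_conjugates_carrier_ord(2)] .
  moreover have "card (carrier S - torus_conjugates) = n - card torus_conjugates"
    and "card torus_conjugates \<le> n"
    using X_sub finite_carrier_S by (simp_all add: n_def card_Diff_subset finite_subset card_mono)
  ultimately have "25 * n \<le> 7 * psi S"
    using card_torus_conjugates_ge[OF assms] by (simp add: n_def)
  then have "25 * real n \<le> 7 * real (psi S)" by (metis of_nat_le_iff of_nat_mult of_nat_numeral)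
  moreover have "n > 0" using finite_carrier_S S.one_closed by (auto simp: n_def card_gt_0_iff)
  ultimately show ?thesis by (simp add: avg_order_def n_def[symmetric] field_simps)
qed

end

theorem lemma4p11:
  fixes G :: "('g, 'c) monoid_scheme"
    and m :: nat
    and F :: "'a::{field, finite} itself"
  assumes "m \<ge> 1"
    and "CARD('a) = 2 ^ (2 * m + 1)"
    and "group G"
    and "G \<cong> (Sz m :: ('a^4^4) monoid)"
  shows "avg_order G \<ge> 3.55"
proof -
  have group_Sz: "group (Sz m :: ('a^4^4) monoid)"
    using group.iso_imp_group[OF assms(3,4) monoid_Sz] .
  interpret suzuki_group m F
    by (intro suzuki_group.intro suzuki_field.intro suzuki_group_axioms.intro assms(2) group_Sz)
  have "avg_order G = avg_order (Sz m :: ('a^4^4) monoid)"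
    using avg_order_iso_eq[OF assms(3) group_Sz assms(4)] .
  then show ?thesis using avg_order_Sz_ge[OF assms(1)] by simp
qed

end
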